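(* Let $q\in\mathcal X$ be a weak solution of the PDE with null initial datum, and let $H\in C^2_b(\mathbb R,\mathbb R)$ have compactly supported derivative. Define $q_H(x;t):=\int_{m\ge x^1}H(m)q(m,x;t)\,dm$ for $x\in\mathbb R^d$, $t\in]0,T]$. Then $q_H(\cdot;t)\in L^2(\mathbb R^d)$ for all $t\in]0,T]$, and $q_H$ solves $\partial_tq_H=\mathcal L^*q_H+\frac12H'(x^1)q(x^1,x^1,\tilde x;t)$ in the weak sense: for all $F\in C^2_c(\mathbb R^d,\mathbb R)$ and all $t\in]0,T]$, $$\int_{\mathbb R^d}F(x)q_H(x;t)\,dx=\int_0^t\!\!\int_{\mathbb R^d}\mathcal LF(x)\,q_H(x;s)\,dx\,ds+\frac12\int_0^t\!\!\int_{\mathbb R^d}H'(m)F(m,\tilde x)\,q(m,m,\tilde x;s)\,dm\,d\tilde x\,ds,$$ where $\mathcal LF=B\cdot\nabla F+\frac12\Delta F$ and $\mathcal L^*\Phi=-B\cdot\nabla\Phi-\Phi\,\mathrm{div}B+\frac12\Delta\Phi$.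
   Context: Standing setting: $d\ge1$, $T>0$, $B\in C^1_b(\mathbb R^d,\mathbb R^d)$. Write $x=(x^1,\tilde x)\in\mathbb R\times\mathbb R^{d-1}$; $\mathcal T:=\{(m,x)\in\mathbb R\times\mathbb R^d:m\ge x^1\}$. For $\Phi\in C^2(\mathbb R^{d+1})$, $\mathcal L\Phi(m,x)=\sum_iB^i(x)\partial_{x^i}\Phi+\frac12\sum_i\partial^2_{x^ix^i}\Phi$ (acting on $x$ only). $\mathcal X$: real functions $p$ on $]0,T]\times\mathcal T$ with (a) $\sup_{t\in]0,T]}\int_{\mathbb R^d}[\int_{m\ge x^1}|p(m,x;t)|dm]^2dx<\infty$; (c) for all $t$, $(m,\tilde x)\mapsto\sup_{u>0}p(m,m-u,\tilde x;t)\in L^1(\mathbb R^d)$, and for a.e. $(m,\tilde x)$, $x^1\mapsto p(m,x^1,\tilde x;t)$ is continuous on $]-\infty,m[$ and $p(m,m,\tilde x;t):=\lim_{u\to0^+}p(m,m-u,\tilde x;t)$ exists; (b) $(m,\tilde x;s)\mapsto p(m,m,\tilde x;s)\in L^1(]0,T];L^2(\mathbb R^d))$. Weak solution with null initial datum: $q\in\mathcal X$ such that for all $\Phi\in C^2_c(\mathbb R^{d+1})$, $t\in]0,T]$: $\int_{\mathcal T}\Phi q(\cdot;t)=\int_0^t\int_{\mathcal T}q(m,x;s)\mathcal L\Phi(m,x)\,dm\,dx\,ds+\frac12\int_0^t\int_{\mathbb R^d}\partial_m\Phi(m,m,\tilde x)q(m,m,\tilde x;s)\,dm\,d\tilde x\,ds$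 ($\partial_m\Phi$ = derivative in the first variable, evaluated at $(m,m,\tilde x)$). *)

theory Defs
  imports "HOL-Analysis.Analysis"
begin

text \<open>Points of R^d are vectors real^'n (d = CARD('n) \<ge> 1); the distinguished
  first coordinate x^1 is the coordinate i0 :: 'n, the remaining coordinates form x-tilde.\<close>

definition pd :: "('a::real_normed_vector \<Rightarrow> real) \<Rightarrow> 'a \<Rightarrow> 'a \<Rightarrow> real" where
  "pd f v x = deriv (\<lambda>h. f (x + h *\<^sub>R v)) 0"

definition C1_fun :: "('a::euclidean_space \<Rightarrow> real) \<Rightarrow> bool" where
  "C1_fun f \<longleftrightarrow> continuous_on UNIV f \<and>
     (\<forall>v\<in>Basis. (\<forall>x. (\<lambda>h. f (x + h *\<^sub>R v)) differentiable (at 0)) \<and> continuous_on UNIV (pd f v))"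

definition C2_fun :: "('a::euclidean_space \<Rightarrow> real) \<Rightarrow> bool" where
  "C2_fun f \<longleftrightarrow> C1_fun f \<and> (\<forall>v\<in>Basis. C1_fun (pd f v))"

definition C2c :: "('a::euclidean_space \<Rightarrow> real) \<Rightarrow> bool" where
  "C2c f \<longleftrightarrow> C2_fun f \<and> compact (closure {x. f x \<noteq> 0})"

definition C1b_field :: "(real^'n \<Rightarrow> real^'n) \<Rightarrow> bool" where
  "C1b_field B \<longleftrightarrow> (\<forall>i. C1_fun (\<lambda>x. B x $ i)) \<and> bounded (range B) \<and>
     (\<forall>i j. bounded (range (pd (\<lambda>x. B x $ i) (axis j 1))))"

definition C2b_real :: "(real \<Rightarrow> real) \<Rightarrow> bool" where
  "C2b_real H \<longleftrightarrow> C2_fun H \<and> bounded (range H) \<and> bounded (range (deriv H)) \<and>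
     bounded (range (deriv (deriv H)))"

definition setc :: "'n \<Rightarrow> real^'n \<Rightarrow> real \<Rightarrow> real^'n" where
  "setc i0 y a = (\<chi> j. if j = i0 then a else y $ j)"

definition Tset :: "'n \<Rightarrow> (real \<times> (real^'n)) set" where
  "Tset i0 = {(m, x). x $ i0 \<le> m}"

text \<open>Boundary trace p(m,m,x-tilde;t) := lim_{u\<rightarrow>0+} p(m,m-u,x-tilde;t), where the point
  y = (m, x-tilde) of R^d has y$i0 = m.\<close>
definition trace :: "'n \<Rightarrow> (real \<Rightarrow> real^'n \<Rightarrow> real \<Rightarrow> real) \<Rightarrow> real^'n \<Rightarrow> real \<Rightarrow> real" where
  "trace i0 p y s = Lim (at_left (y $ i0)) (\<lambda>a. p (y $ i0) (setc i0 y a) s)"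

definition LPhi :: "'n \<Rightarrow> (real^'n \<Rightarrow> real^'n) \<Rightarrow> (real \<times> (real^('n::finite)) \<Rightarrow> real) \<Rightarrow> real \<times> (real^'n) \<Rightarrow> real" where
  "LPhi i0 B \<Phi> z = (\<Sum>i\<in>UNIV. B (snd z) $ i * pd \<Phi> (0, axis i 1) z)
      + 1/2 * (\<Sum>i\<in>UNIV. pd (pd \<Phi> (0, axis i 1)) (0, axis i 1) z)"

definition genL :: "(real^'n \<Rightarrow> real^'n) \<Rightarrow> (real^('n::finite) \<Rightarrow> real) \<Rightarrow> real^'n \<Rightarrow> real" where
  "genL B F x = (\<Sum>i\<in>UNIV. B x $ i * pd F (axis i 1) x)
      + 1/2 * (\<Sum>i\<in>UNIV. pd (pd F (axis i 1)) (axis i 1) x)"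

text \<open>The class X (with the implicit measurability needed for the integrals to make sense).\<close>
definition inX :: "'n \<Rightarrow> real \<Rightarrow> (real \<Rightarrow> real^('n::finite) \<Rightarrow> real \<Rightarrow> real) \<Rightarrow> bool" where
  "inX i0 T p \<longleftrightarrow>
     \<comment> \<open>measurability\<close>
     (\<forall>t\<in>{0<..T}. (\<lambda>z. indicator (Tset i0) z * p (fst z) (snd z) t) \<in> borel_measurable lborel) \<and>
     (\<lambda>(z, t). indicator (Tset i0) z * indicator {0<..T} t * p (fst z) (snd z) t)
        \<in> borel_measurable (lborel :: ((real \<times> (real^'n)) \<times> real) measure) \<and>
     \<comment> \<open>(a)\<close>
     (SUP t\<in>{0<..T}. \<integral>\<^sup>+ x. (\<integral>\<^sup>+ m. indicator {x $ i0..} m * ennreal \<bar>p m x t\<bar> \<partial>lborel)\<^sup>2 \<partial>lborel) < \<infinity> \<and>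
     \<comment> \<open>(c)\<close>
     (\<forall>t\<in>{0<..T}.
        (AE y in lborel. \<bar>SUP u\<in>{0<..}. ereal (p (y $ i0) (setc i0 y (y $ i0 - u)) t)\<bar> \<noteq> \<infinity>) \<and>
        integrable lborel (\<lambda>y. real_of_ereal (SUP u\<in>{0<..}. ereal (p (y $ i0) (setc i0 y (y $ i0 - u)) t))) \<and>
        (AE y in lborel. continuous_on {..<y $ i0} (\<lambda>a. p (y $ i0) (setc i0 y a) t) \<and>
            (\<exists>L. ((\<lambda>a. p (y $ i0) (setc i0 y a) t) \<longlongrightarrow> L) (at_left (y $ i0))))) \<and>
     \<comment> \<open>(b): trace in L^1(]0,T]; L^2(R^d))\<close>
     (\<lambda>(y, s). indicator {0<..T} s * trace i0 p y s) \<in> borel_measurable (lborel :: ((real^'n) \<times> real) measure) \<and>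
     (AE s in lborel. s \<in> {0<..T} \<longrightarrow> integrable lborel (\<lambda>y. (trace i0 p y s)\<^sup>2)) \<and>
     (\<integral>\<^sup>+ s. indicator {0<..T} s * ennreal (sqrt (\<integral> y. (trace i0 p y s)\<^sup>2 \<partial>lborel)) \<partial>lborel) < \<infinity>"

definition weak_sol :: "'n \<Rightarrow> real \<Rightarrow> (real^'n \<Rightarrow> real^'n) \<Rightarrow> (real \<Rightarrow> real^('n::finite) \<Rightarrow> real \<Rightarrow> real) \<Rightarrow> bool" where
  "weak_sol i0 T B q \<longleftrightarrow> inX i0 T q \<and>
     (\<forall>\<Phi>. C2c \<Phi> \<longrightarrow> (\<forall>t\<in>{0<..T}.
        (\<integral> z. indicator (Tset i0) z * \<Phi> z * q (fst z) (snd z) t \<partial>lborel) =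
        (\<integral> s. indicator {0<..t} s *
            (\<integral> z. indicator (Tset i0) z * q (fst z) (snd z) s * LPhi i0 B \<Phi> z \<partial>lborel) \<partial>lborel)
        + 1/2 * (\<integral> s. indicator {0<..t} s *
            (\<integral> y. pd \<Phi> (1, 0) (y $ i0, y) * trace i0 q y s \<partial>lborel) \<partial>lborel)))"

definition qH :: "'n \<Rightarrow> (real \<Rightarrow> real) \<Rightarrow> (real \<Rightarrow> real^('n::finite) \<Rightarrow> real \<Rightarrow> real) \<Rightarrow> real^'n \<Rightarrow> real \<Rightarrow> real" where
  "qH i0 H q x t = (\<integral> m. indicator {x $ i0..} m * H m * q m x t \<partial>lborel)"

end

(* Test the weak formulation with Phi_n(m, x) = H(m) chi_n(m) F(x), where chi_n is a C^2 cutoff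
   equal to 1 on [-n, n] and vanishing outside [-n-1, n+1].  Then L Phi_n = H chi_n (L F), and
   d_m Phi_n = (H' chi_n + H chi_n') F; once n exceeds the extent of supp F in the x^1-direction,
   chi_n' no longer meets the boundary term, which is then exactly
   1/2 \<integral> H'(m) F(m, x~) q(m, m, x~) dm dx~.  As n \<rightarrow> \<infinity> the two remaining integrals converge by
   dominated convergence and become integrals of q_H by Fubini.  The dominating bound, like the
   L^2 bound |q_H(x)| \<le> sup |H| \<integral> |q(m, x)| dm, comes from condition (a) of the class X through
   \<integral>_S g \<le> |S| + \<integral> g^2 for a set S of finite measure. *)

theory Submission
  imports Defs
begin

section \<open>C^2 functions of one variable and a cutoff\<close>

definition C2_with_derivs :: "(real \<Rightarrow> real) \<Rightarrow> (real \<Rightarrow> real) \<Rightarrow> (real \<Rightarrow> real) \<Rightarrow> bool" where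
  "C2_with_derivs g g' g'' \<longleftrightarrow>
     (\<forall>x. (g has_real_derivative g' x) (at x)) \<and> (\<forall>x. (g' has_real_derivative g'' x) (at x)) \<and>
     continuous_on UNIV g''"

lemma C2_with_derivsD:
  assumes "C2_with_derivs g g' g''"
  shows "(g has_real_derivative g' x) (at x)" "(g' has_real_derivative g'' x) (at x)"
    and "continuous_on UNIV g" "continuous_on UNIV g'" "continuous_on UNIV g''"
  using assms unfolding C2_with_derivs_def
  by (auto intro!: continuous_at_imp_continuous_on DERIV_isCont)

lemma C2_with_derivs_mult:
  assumes "C2_with_derivs g g' g''" "C2_with_derivs h h' h''"
  shows "C2_with_derivs (\<lambda>x. g x * h x) (\<lambda>x. g' x * h x + g x * h' x)
           (\<lambda>x. g'' x * h x + 2 * (g' x * h' x) + g x * h'' x)"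
  using C2_with_derivsD[OF assms(1)] C2_with_derivsD[OF assms(2)] unfolding C2_with_derivs_def
  by (auto intro!: derivative_eq_intros continuous_intros simp: algebra_simps)

lemma C2_with_derivs_affine:
  assumes "C2_with_derivs g g' g''"
  shows "C2_with_derivs (\<lambda>x. g (a * x + b)) (\<lambda>x. a * g' (a * x + b)) (\<lambda>x. a * a * g'' (a * x + b))"
proof -
  have lin: "((\<lambda>x. a * x + b) has_real_derivative a) (at x)" for x
    by (auto intro!: derivative_eq_intros)
  have "((\<lambda>x. g (a * x + b)) has_real_derivative g' (a * x + b) * a) (at x)" for x
    by (rule DERIV_chain2[OF C2_with_derivsD(1)[OF assms] lin])
  moreover have "((\<lambda>x. g' (a * x + b)) has_real_derivative g'' (a * x + b) * a) (at x)" for x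
    by (rule DERIV_chain2[OF C2_with_derivsD(2)[OF assms] lin])
  moreover have "continuous_on UNIV (\<lambda>x. g'' (a * x + b))"
    by (rule continuous_on_compose2[OF C2_with_derivsD(5)[OF assms]]) (auto intro!: continuous_intros)
  ultimately show ?thesis
    unfolding C2_with_derivs_def
    by (auto intro!: DERIV_cmult[THEN DERIV_cong] continuous_on_mult_left simp: mult.commute)
qed

lemma has_real_derivative_paste:
  fixes f g :: "real \<Rightarrow> real"
  assumes "\<And>x. (f has_real_derivative f' x) (at x)" "\<And>x. (g has_real_derivative g' x) (at x)"
    and "f a = g a" "f' a = g' a"
  shows "((\<lambda>x. if x \<le> a then f x else g x) has_real_derivative (if x \<le> a then f' x else g' x)) (at x)"
proof -
  have "((\<lambda>x. if x \<in> {..a} then f x else g x) has_vector_derivative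
      (if x \<in> {..a} then f' x else g' x)) (at x within UNIV)"
    by (rule has_vector_derivative_If_within_closures[where T = "{a<..}"])
      (use assms in \<open>auto simp: has_real_derivative_iff_has_vector_derivative[symmetric]
          intro: has_field_derivative_at_within\<close>)
  then show ?thesis by (simp add: has_real_derivative_iff_has_vector_derivative)
qed

lemma C2_with_derivs_paste:
  assumes f: "C2_with_derivs f f' f''" and g: "C2_with_derivs g g' g''"
    and "f a = g a" "f' a = g' a" "f'' a = g'' a"
  shows "C2_with_derivs (\<lambda>x. if x \<le> a then f x else g x) (\<lambda>x. if x \<le> a then f' x else g' x)
           (\<lambda>x. if x \<le> a then f'' x else g'' x)"
proof -
  have "continuous_on UNIV (\<lambda>x. if x \<le> a then f'' x else g'' x)"
    by (rule continuous_on_cases_le[where h = id, simplified])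
      (use assms(5) C2_with_derivsD(5)[OF f] C2_with_derivsD(5)[OF g] in \<open>auto intro: continuous_on_subset\<close>)
  then show ?thesis
    unfolding C2_with_derivs_def
    using has_real_derivative_paste[OF C2_with_derivsD(1)[OF f] C2_with_derivsD(1)[OF g] assms(3,4)]
      has_real_derivative_paste[OF C2_with_derivsD(2)[OF f] C2_with_derivsD(2)[OF g] assms(4,5)]
    by blast
qed

lemma C2_with_derivs_const: "C2_with_derivs (\<lambda>_. c) (\<lambda>_. 0) (\<lambda>_. 0)"
  unfolding C2_with_derivs_def by auto

(* 1 minus the quintic smoothstep 10u^3 - 15u^4 + 6u^5, whose first two derivatives vanish at
   0 and 1: pasting it with the constants 1 and 0 is therefore C^2. *)
definition step_down :: "real \<Rightarrow> real" where
  "step_down u = (if u \<le> 0 then 1 else if u \<le> 1 then 1 - 10 * u^3 + 15 * u^4 - 6 * u^5 else 0)"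

definition step_down' :: "real \<Rightarrow> real" where
  "step_down' u = (if u \<le> 0 then 0 else if u \<le> 1 then - 30 * u^2 + 60 * u^3 - 30 * u^4 else 0)"

definition step_down'' :: "real \<Rightarrow> real" where
  "step_down'' u = (if u \<le> 0 then 0 else if u \<le> 1 then - 60 * u + 180 * u^2 - 120 * u^3 else 0)"

lemma C2_step_down: "C2_with_derivs step_down step_down' step_down''"
proof -
  have poly: "C2_with_derivs (\<lambda>u. 1 - 10 * u^3 + 15 * u^4 - 6 * u^5)
      (\<lambda>u. - 30 * u^2 + 60 * u^3 - 30 * u^4) (\<lambda>u. - 60 * u + 180 * u^2 - 120 * u^3)"
    unfolding C2_with_derivs_def
    by (auto intro!: derivative_eq_intros continuous_intros simp: algebra_simps power2_eq_square
        power3_eq_cube power4_eq_xxxx)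
  show ?thesis
    unfolding step_down_def[abs_def] step_down'_def[abs_def] step_down''_def[abs_def]
    by (intro C2_with_derivs_paste C2_with_derivs_const poly) auto
qed

lemma step_down_bounds: "0 \<le> step_down u \<and> step_down u \<le> 1"
proof (cases "0 < u \<and> u \<le> 1")
  case True
  define p where "p = 1 - 10 * u^3 + 15 * u^4 - 6 * u^5"
  have "p = (1 - u)^3 * (1 + 3 * u + 6 * u^2)" and "1 - p = u^3 * (6 * (u - 5/4)^2 + 5/8)"
    unfolding p_def by (simp_all add: algebra_simps power2_eq_square power3_eq_cube power4_eq_xxxx power_def)
  moreover have "0 \<le> (1 - u)^3 * (1 + 3 * u + 6 * u^2)" "0 \<le> u^3 * (6 * (u - 5/4)^2 + 5/8)"
    using True by (intro mult_nonneg_nonneg add_nonneg_nonneg; simp)+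
  moreover have "step_down u = p"
    using True by (simp add: step_down_def p_def)
  ultimately show ?thesis by linarith
qed (auto simp: step_down_def)

lemma step_down_eq_0: "1 \<le> u \<Longrightarrow> step_down u = 0"
  by (cases "u = 1") (auto simp: step_down_def)

definition plateau :: "nat \<Rightarrow> real \<Rightarrow> real" where
  "plateau n m = step_down (m - n) * step_down (- m - n)"

definition plateau' :: "nat \<Rightarrow> real \<Rightarrow> real" where
  "plateau' n m = step_down' (m - n) * step_down (- m - n) - step_down (m - n) * step_down' (- m - n)"

lemma C2_plateau: "\<exists>p''. C2_with_derivs (plateau n) (plateau' n) p''"
  using C2_with_derivs_mult[OF C2_with_derivs_affine[OF C2_step_down, of 1 "- real n"]
      C2_with_derivs_affine[OF C2_step_down, of "- 1" "- real n"]]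
  unfolding plateau_def[abs_def] plateau'_def[abs_def] by (auto simp: algebra_simps)

lemma plateau_bounds: "\<bar>plateau n m\<bar> \<le> 1"
  using step_down_bounds[of "m - n"] step_down_bounds[of "- m - n"]
  by (simp add: plateau_def abs_mult mult_le_one)

lemma plateau_eq_1:
  assumes "\<bar>m\<bar> \<le> n"
  shows "plateau n m = 1" "plateau' n m = 0"
  using assms by (auto simp: plateau_def plateau'_def step_down_def step_down'_def)

lemma plateau_eq_0: "n + 1 \<le> \<bar>m\<bar> \<Longrightarrow> plateau n m = 0"
  by (cases "0 \<le> m") (auto simp: plateau_def step_down_eq_0)

lemma tendsto_plateau: "(\<lambda>n. plateau n m) \<longlonglongrightarrow> 1"
proof (rule tendsto_eventually)
  obtain N :: nat where "\<bar>m\<bar> \<le> N" using real_arch_simple by blast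
  then show "\<forall>\<^sub>F n in sequentially. plateau n m = 1"
    unfolding eventually_sequentially by (auto intro!: exI[of _ N] plateau_eq_1)
qed

lemma borel_measurable_plateau [measurable]: "plateau n \<in> borel_measurable borel"
  using C2_plateau[of n] C2_with_derivsD(3) by (auto intro: borel_measurable_continuous_onI)

lemma C1_fun_real:
  fixes f :: "real \<Rightarrow> real"
  assumes "C1_fun f"
  shows "pd f 1 = deriv f" "(f has_real_derivative deriv f x) (at x)"
proof -
  have "((\<lambda>h. f (h + y)) has_real_derivative pd f 1 y) (at 0)" for y
    using assms unfolding C1_fun_def pd_def
    by (auto simp: Basis_real_def DERIV_deriv_iff_real_differentiable add.commute)
  then have "(f has_real_derivative pd f 1 y) (at y)" for y
    using DERIV_shift[of f _ 0 y] by simp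
  then show "pd f 1 = deriv f" "(f has_real_derivative deriv f x) (at x)"
    using DERIV_imp_deriv by (metis ext)+
qed

lemma C2_fun_real:
  fixes H :: "real \<Rightarrow> real"
  assumes "C2_fun H"
  shows "C2_with_derivs H (deriv H) (deriv (deriv H))"
proof -
  have "C1_fun H" and C1: "C1_fun (deriv H)"
    using assms C1_fun_real(1) unfolding C2_fun_def by (auto simp: Basis_real_def)
  then show ?thesis
    using C1_fun_real[OF \<open>C1_fun H\<close>] C1_fun_real[OF C1]
    unfolding C2_with_derivs_def C1_fun_def by (auto simp: Basis_real_def)
qed

lemma borel_measurable_C2_fun:
  fixes H :: "real \<Rightarrow> real"
  assumes "C2_fun H"
  shows "H \<in> borel_measurable lborel"
  using C2_with_derivsD(3)[OF C2_fun_real[OF assms]] by (simp add: borel_measurable_continuous_onI)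

section \<open>Tensor-product test functions\<close>

definition tensor :: "(real \<Rightarrow> real) \<Rightarrow> ('a \<Rightarrow> real) \<Rightarrow> real \<times> 'a \<Rightarrow> real" where
  "tensor g f z = g (fst z) * f (snd z)"

lemma pd_tensor_fst:
  fixes f :: "'a::real_normed_vector \<Rightarrow> real"
  assumes "(g has_real_derivative g' (fst z)) (at (fst z))"
  shows "(\<lambda>h. tensor g f (z + h *\<^sub>R (1, 0))) differentiable (at 0)"
    and "pd (tensor g f) (1, 0) z = g' (fst z) * f (snd z)"
proof -
  have "((\<lambda>h. g (h + fst z)) has_real_derivative g' (fst z)) (at 0)"
    using DERIV_shift[of g "g' (fst z)" 0 "fst z"] assms by simp
  then have "((\<lambda>h. tensor g f (z + h *\<^sub>R (1, 0))) has_real_derivative g' (fst z) * f (snd z)) (at 0)"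
    unfolding tensor_def by (auto intro!: derivative_eq_intros simp: add.commute)
  then show "(\<lambda>h. tensor g f (z + h *\<^sub>R (1, 0))) differentiable (at 0)"
    and "pd (tensor g f) (1, 0) z = g' (fst z) * f (snd z)"
    unfolding pd_def by (auto simp: real_differentiable_def DERIV_imp_deriv)
qed

lemma pd_tensor_snd:
  fixes f :: "'a::real_normed_vector \<Rightarrow> real"
  assumes "(\<lambda>h. f (snd z + h *\<^sub>R v)) differentiable (at 0)"
  shows "(\<lambda>h. tensor g f (z + h *\<^sub>R (0, v))) differentiable (at 0)"
    and "pd (tensor g f) (0, v) z = g (fst z) * pd f v (snd z)"
proof -
  have "((\<lambda>h. f (snd z + h *\<^sub>R v)) has_real_derivative pd f v (snd z)) (at 0)"
    using assms unfolding pd_def by (simp add: DERIV_deriv_iff_real_differentiable)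
  then have "((\<lambda>h. tensor g f (z + h *\<^sub>R (0, v))) has_real_derivative g (fst z) * pd f v (snd z)) (at 0)"
    unfolding tensor_def by (auto intro!: derivative_eq_intros)
  then show "(\<lambda>h. tensor g f (z + h *\<^sub>R (0, v))) differentiable (at 0)"
    and "pd (tensor g f) (0, v) z = g (fst z) * pd f v (snd z)"
    unfolding pd_def[of "tensor g f"] by (auto simp: real_differentiable_def DERIV_imp_deriv)
qed

lemma continuous_on_tensor:
  assumes "continuous_on UNIV g" "continuous_on UNIV f"
  shows "continuous_on UNIV (tensor g f)"
  unfolding tensor_def[abs_def]
  by (intro continuous_intros continuous_on_compose2[OF assms(1)] continuous_on_compose2[OF assms(2)])
    auto

lemma Basis_prod_cases:
  assumes "(v :: real \<times> 'a::euclidean_space) \<in> Basis"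
  obtains "v = (1, 0)" | w where "w \<in> Basis" "v = (0, w)"
  using assms unfolding Basis_prod_def Basis_real_def by auto

lemma C1_fun_tensor:
  fixes f :: "'a::euclidean_space \<Rightarrow> real"
  assumes g: "\<And>x. (g has_real_derivative g' x) (at x)" and g': "continuous_on UNIV g'"
    and f: "C1_fun f"
  shows "C1_fun (tensor g f)"
    and "pd (tensor g f) (1, 0) = tensor g' f"
    and "\<And>w. w \<in> Basis \<Longrightarrow> pd (tensor g f) (0, w) = tensor g (pd f w)"
proof -
  have "continuous_on UNIV g" using g by (meson DERIV_isCont continuous_at_imp_continuous_on)
  moreover have f_diff: "\<And>w x. w \<in> Basis \<Longrightarrow> (\<lambda>h. f (x + h *\<^sub>R w)) differentiable (at 0)"
    and "continuous_on UNIV f" and "\<And>w. w \<in> Basis \<Longrightarrow> continuous_on UNIV (pd f w)"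
    using f unfolding C1_fun_def by auto
  moreover show pd_fst: "pd (tensor g f) (1, 0) = tensor g' f"
    using pd_tensor_fst(2)[of g g', OF g] by (intro ext) (simp add: tensor_def[of g'])
  moreover show pd_snd: "\<And>w. w \<in> Basis \<Longrightarrow> pd (tensor g f) (0, w) = tensor g (pd f w)"
    using pd_tensor_snd(2)[OF f_diff] by (auto simp: tensor_def[of g "pd f w" for w])
  moreover have "(\<lambda>h. tensor g f (z + h *\<^sub>R v)) differentiable (at 0)" if "v \<in> Basis" for v z
    using that
  proof (cases rule: Basis_prod_cases)
    case 1
    then show ?thesis using pd_tensor_fst(1)[of g g' z f, OF g] by simp
  next
    case (2 w)
    then show ?thesis using pd_tensor_snd(1)[OF f_diff[of w "snd z"], where g = g] by simp
  qed
  ultimately show "C1_fun (tensor g f)"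
    unfolding C1_fun_def
    by (auto elim!: Basis_prod_cases intro!: continuous_on_tensor g')
qed

lemma C2_fun_tensor:
  fixes f :: "'a::euclidean_space \<Rightarrow> real"
  assumes g: "C2_with_derivs g g' g''" and f: "C2_fun f"
  shows "C2_fun (tensor g f)"
proof -
  note g_facts = C2_with_derivsD[OF g]
  have f1: "C1_fun f" and f2: "\<And>w. w \<in> Basis \<Longrightarrow> C1_fun (pd f w)"
    using f unfolding C2_fun_def by auto
  note tensor_g = C1_fun_tensor[OF g_facts(1,4) f1]
  have "C1_fun (tensor g' f)" by (rule C1_fun_tensor(1)[OF g_facts(2,5) f1])
  moreover have "C1_fun (tensor g (pd f w))" if "w \<in> Basis" for w
    by (rule C1_fun_tensor(1)[OF g_facts(1,4) f2[OF that]])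
  ultimately show ?thesis
    unfolding C2_fun_def using tensor_g by (auto elim!: Basis_prod_cases)
qed

lemma C2c_tensor:
  fixes f :: "'a::euclidean_space \<Rightarrow> real"
  assumes "C2_with_derivs g g' g''" "bounded {m. g m \<noteq> 0}" "C2c f"
  shows "C2c (tensor g f)"
proof -
  have "{z. tensor g f z \<noteq> 0} \<subseteq> {m. g m \<noteq> 0} \<times> closure {x. f x \<noteq> 0}"
    using closure_subset by (force simp: tensor_def)
  moreover have "bounded ({m. g m \<noteq> 0} \<times> closure {x. f x \<noteq> 0})"
    using assms(3) unfolding C2c_def by (intro bounded_Times[OF assms(2)] compact_imp_bounded) auto
  ultimately show ?thesis
    using C2_fun_tensor[OF assms(1)] assms(3)
    unfolding C2c_def by (auto simp: compact_closure intro: bounded_subset)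
qed

lemma axis_1_in_Basis: "axis i (1::real) \<in> Basis"
  by (simp add: axis_in_Basis_iff Basis_real_def)

lemma LPhi_tensor:
  fixes F :: "real^'n \<Rightarrow> real"
  assumes "C2_with_derivs g g' g''" "C2_fun F"
  shows "LPhi i0 B (tensor g F) = tensor g (genL B F)"
proof -
  note g_facts = C2_with_derivsD[OF assms(1)]
  have "C1_fun F" and "\<And>w. w \<in> Basis \<Longrightarrow> C1_fun (pd F w)" using assms(2) unfolding C2_fun_def by auto
  moreover note axis_1_in_Basis
  ultimately have "pd (tensor g F) (0, axis i 1) = tensor g (pd F (axis i 1))"
    and "pd (tensor g (pd F (axis i 1))) (0, axis i 1) = tensor g (pd (pd F (axis i 1)) (axis i 1))" for i
    using C1_fun_tensor(3)[OF g_facts(1,4)] by blast+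
  then show ?thesis
    by (intro ext) (simp add: LPhi_def genL_def tensor_def sum_distrib_left algebra_simps)
qed

lemma pd_eq_0_open:
  fixes f :: "'a::real_normed_vector \<Rightarrow> real"
  assumes "open U" "x \<in> U" "\<And>y. y \<in> U \<Longrightarrow> f y = 0"
  shows "pd f v x = 0"
proof -
  have "continuous_on UNIV (\<lambda>h::real. x + h *\<^sub>R v)" by (intro continuous_intros)
  then have "open ((\<lambda>h. x + h *\<^sub>R v) -` U)" by (rule open_vimage[OF assms(1)])
  then have "((\<lambda>h. f (x + h *\<^sub>R v)) has_real_derivative 0) (at 0)"
    by (rule has_field_derivative_transform_within_open[OF DERIV_const]) (use assms(2,3) in simp_all)
  then show ?thesis by (simp add: pd_def DERIV_imp_deriv)
qed

lemma vanishing_outside_support: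
  fixes F :: "'a::euclidean_space \<Rightarrow> real"
  assumes "x \<notin> closure {x. F x \<noteq> 0}"
  shows "F x = 0" "pd F v x = 0" "pd (pd F v) w x = 0"
proof -
  let ?U = "- closure {x. F x \<noteq> 0}"
  have F_0: "F y = 0" if "y \<in> ?U" for y
  proof (rule ccontr)
    assume "F y \<noteq> 0"
    then have "y \<in> closure {x. F x \<noteq> 0}" by (simp add: rev_subsetD[OF _ closure_subset])
    with that show False by simp
  qed
  show "F x = 0" by (rule F_0) (use assms in simp)
  have pd_0: "pd F v y = 0" if "y \<in> ?U" for y
    by (rule pd_eq_0_open[OF open_Compl[OF closed_closure] that F_0])
  show "pd F v x = 0" by (rule pd_0) (use assms in simp)
  show "pd (pd F v) w x = 0"
    by (rule pd_eq_0_open[OF open_Compl[OF closed_closure] _ pd_0]) (use assms in simp)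
qed

lemma genL_vanishing_outside_support:
  assumes "x \<notin> closure {x. F x \<noteq> 0}"
  shows "genL B F x = 0"
  unfolding genL_def using vanishing_outside_support(2,3)[OF assms] by simp

lemma continuous_on_genL:
  assumes "C1b_field B" "C2_fun F"
  shows "continuous_on UNIV (genL B F)"
proof -
  have B: "continuous_on UNIV (\<lambda>x. B x $ i)" and F: "continuous_on UNIV (pd F (axis i 1))"
    "continuous_on UNIV (pd (pd F (axis i 1)) (axis i 1))" for i
    using assms axis_1_in_Basis unfolding C1b_field_def C2_fun_def C1_fun_def by auto
  show ?thesis
    unfolding genL_def[abs_def] by (intro continuous_intros B F)
qed

lemma compact_support_bound:
  fixes W :: "'a::euclidean_space \<Rightarrow> real"
  assumes "continuous_on UNIV W" "compact S" "\<And>x. x \<notin> S \<Longrightarrow> W x = 0"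
  obtains Wb where "0 \<le> Wb" "\<And>x. \<bar>W x\<bar> \<le> Wb * indicator S x"
proof -
  obtain b where b: "\<And>x. x \<in> S \<Longrightarrow> \<bar>W x\<bar> \<le> b"
    using compact_imp_bounded[OF compact_continuous_image[OF continuous_on_subset[OF assms(1)] assms(2)]]
    unfolding bounded_iff by auto
  show ?thesis
    by (rule that[of "max b 0"]) (use b assms(3) in \<open>force simp: indicator_def le_max_iff_disj\<close>)+
qed

lemma C2c_component_bound:
  fixes F :: "real^'n \<Rightarrow> real"
  assumes "C2c F"
  obtains R where "\<And>y. F y \<noteq> 0 \<Longrightarrow> \<bar>y $ i\<bar> \<le> R"
proof -
  have "bounded {x. F x \<noteq> 0}" using assms unfolding C2c_def by (simp add: compact_closure)
  then obtain R where "\<And>y. F y \<noteq> 0 \<Longrightarrow> norm y \<le> R" unfolding bounded_iff by blast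
  then show ?thesis using that component_le_norm_cart order_trans by metis
qed

lemma measurable_tensor [measurable]:
  assumes [measurable]: "g \<in> borel_measurable M" "f \<in> borel_measurable N"
  shows "tensor g f \<in> borel_measurable (M \<Otimes>\<^sub>M N)"
  unfolding tensor_def[abs_def] by measurable

lemma borel_measurable_tensor_lborel [measurable]:
  fixes f :: "'b::euclidean_space \<Rightarrow> real"
  assumes "g \<in> borel_measurable lborel" "f \<in> borel_measurable lborel"
  shows "tensor g f \<in> borel_measurable lborel"
  using measurable_tensor[OF assms] by (simp add: lborel_prod)

section \<open>Estimates in the mixed norm of L^2(L^1)\<close>

(* The square of the L^2_x(L^1_m) norm; condition (a) of the class X bounds it uniformly in time. *)
definition mixed_norm_sq :: "(real \<times> 'b::euclidean_space \<Rightarrow> real) \<Rightarrow> ennreal" where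
  "mixed_norm_sq Q = (\<integral>\<^sup>+ x. (\<integral>\<^sup>+ m. ennreal \<bar>Q (m, x)\<bar> \<partial>lborel)\<^sup>2 \<partial>lborel)"

lemma indicator_mult_le_indicator_plus_square: "(indicator S x :: ennreal) * g \<le> indicator S x + g\<^sup>2"
proof (cases "x \<in> S \<and> 1 \<le> g")
  case True
  then have "g * 1 \<le> g * g" by (intro mult_left_mono) auto
  then show ?thesis using True by (simp add: power2_eq_square add_increasing)
qed (auto simp: add_increasing2 indicator_def)

lemma nn_integral_tensor_le:
  fixes Q :: "real \<times> 'b::euclidean_space \<Rightarrow> real"
  assumes [measurable]: "Q \<in> borel_measurable lborel" "G \<in> borel_measurable lborel"
      "W \<in> borel_measurable lborel" "S \<in> sets lborel"
    and G_le: "\<And>m. \<bar>G m\<bar> \<le> Gb" and W_le: "\<And>x. \<bar>W x\<bar> \<le> Wb * indicator S x" and "0 \<le> Wb"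
  shows "(\<integral>\<^sup>+ z. ennreal \<bar>Q z * tensor G W z\<bar> \<partial>lborel) \<le> ennreal (Gb * Wb) * (emeasure lborel S + mixed_norm_sq Q)"
proof -
  have [measurable]: "Q \<in> borel_measurable (lborel \<Otimes>\<^sub>M lborel)"
    using assms(1) by (simp add: lborel_prod)
  have "0 \<le> Gb" using G_le[of 0] by linarith
  let ?g = "\<lambda>x. \<integral>\<^sup>+ m. ennreal \<bar>Q (m, x)\<bar> \<partial>lborel"
  have pointwise: "ennreal \<bar>Q (m, x) * tensor G W (m, x)\<bar> \<le> ennreal (Gb * Wb) * indicator S x * ennreal \<bar>Q (m, x)\<bar>"
    for m x
  proof -
    have "\<bar>G m\<bar> * \<bar>W x\<bar> \<le> Gb * (Wb * indicator S x)"
      by (rule mult_mono[OF G_le W_le]) (use \<open>0 \<le> Gb\<close> in auto)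
    then have "\<bar>Q (m, x) * tensor G W (m, x)\<bar> \<le> \<bar>Q (m, x)\<bar> * (Gb * (Wb * indicator S x))"
      unfolding tensor_def abs_mult by (simp add: mult_left_mono)
    then show ?thesis
      using \<open>0 \<le> Gb\<close> \<open>0 \<le> Wb\<close>
      by (auto simp: indicator_def ennreal_mult[symmetric] algebra_simps intro!: ennreal_leI)
  qed
  have "(\<integral>\<^sup>+ z. ennreal \<bar>Q z * tensor G W z\<bar> \<partial>lborel)
      = (\<integral>\<^sup>+ x. (\<integral>\<^sup>+ m. ennreal \<bar>Q (m, x) * tensor G W (m, x)\<bar> \<partial>lborel) \<partial>lborel)"
    unfolding lborel_prod[symmetric] by (subst lborel_pair.nn_integral_snd[symmetric]) auto
  also have "\<dots> \<le> (\<integral>\<^sup>+ x. ennreal (Gb * Wb) * (indicator S x * ?g x) \<partial>lborel)"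
  proof (rule nn_integral_mono)
    fix x
    have "(\<integral>\<^sup>+ m. ennreal \<bar>Q (m, x) * tensor G W (m, x)\<bar> \<partial>lborel)
        \<le> (\<integral>\<^sup>+ m. ennreal (Gb * Wb) * indicator S x * ennreal \<bar>Q (m, x)\<bar> \<partial>lborel)"
      by (rule nn_integral_mono) (rule pointwise)
    also have "\<dots> = ennreal (Gb * Wb) * (indicator S x * ?g x)"
      by (subst nn_integral_cmult) (auto simp: mult.assoc)
    finally show "(\<integral>\<^sup>+ m. ennreal \<bar>Q (m, x) * tensor G W (m, x)\<bar> \<partial>lborel) \<le> \<dots>" .
  qed
  also have "\<dots> = ennreal (Gb * Wb) * (\<integral>\<^sup>+ x. indicator S x * ?g x \<partial>lborel)"
    by (rule nn_integral_cmult) measurable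
  also have "\<dots> \<le> ennreal (Gb * Wb) * (\<integral>\<^sup>+ x. indicator S x + (?g x)\<^sup>2 \<partial>lborel)"
    by (intro mult_left_mono nn_integral_mono indicator_mult_le_indicator_plus_square) auto
  also have "\<dots> = ennreal (Gb * Wb) * (emeasure lborel S + mixed_norm_sq Q)"
    unfolding mixed_norm_sq_def by (subst nn_integral_add) (auto simp: nn_integral_indicator[OF assms(4)])
  finally show ?thesis .
qed

lemma integrable_tensor:
  fixes Q :: "real \<times> 'b::euclidean_space \<Rightarrow> real"
  assumes [measurable]: "Q \<in> borel_measurable lborel" "G \<in> borel_measurable lborel"
      "W \<in> borel_measurable lborel" "S \<in> sets lborel"
    and G_le: "\<And>m. \<bar>G m\<bar> \<le> Gb" and W_le: "\<And>x. \<bar>W x\<bar> \<le> Wb * indicator S x" and "0 \<le> Wb"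
    and "mixed_norm_sq Q \<le> A" "A < \<infinity>" "emeasure lborel S < \<infinity>"
  shows "integrable lborel (\<lambda>z. Q z * tensor G W z)"
    and "\<bar>\<integral> z. Q z * tensor G W z \<partial>lborel\<bar> \<le> Gb * Wb * (measure lborel S + enn2real A)"
proof -
  have "0 \<le> Gb" using G_le[of 0] by linarith
  have bound: "(\<integral>\<^sup>+ z. ennreal \<bar>Q z * tensor G W z\<bar> \<partial>lborel) \<le> ennreal (Gb * Wb * (measure lborel S + enn2real A))"
  proof -
    have "ennreal (Gb * Wb) * (emeasure lborel S + mixed_norm_sq Q) \<le> ennreal (Gb * Wb) * (emeasure lborel S + A)"
      using assms(8) by (intro mult_left_mono add_left_mono) auto
    also have "\<dots> = ennreal (Gb * Wb * (measure lborel S + enn2real A))"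
      using assms(9,10) \<open>0 \<le> Gb\<close> \<open>0 \<le> Wb\<close>
      by (simp add: emeasure_eq_ennreal_measure ennreal_mult ennreal_plus[symmetric] less_top[symmetric])
    finally show ?thesis
      using nn_integral_tensor_le[OF assms(1-7)] by (rule order_trans[rotated])
  qed
  have [measurable]: "Q \<in> borel_measurable (lborel \<Otimes>\<^sub>M lborel)"
    using assms(1) by (simp add: lborel_prod)
  have "(\<lambda>z. Q z * tensor G W z) \<in> borel_measurable (lborel \<Otimes>\<^sub>M lborel)" by measurable
  then show integrable: "integrable lborel (\<lambda>z. Q z * tensor G W z)"
    using bound by (auto simp: integrable_iff_bounded lborel_prod real_norm_def intro: le_less_trans)
  have "ennreal \<bar>\<integral> z. Q z * tensor G W z \<partial>lborel\<bar> \<le> (\<integral>\<^sup>+ z. ennreal \<bar>Q z * tensor G W z\<bar> \<partial>lborel)"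
    using integral_norm_bound_ennreal[OF integrable] by (simp add: real_norm_def)
  also note bound
  finally show "\<bar>\<integral> z. Q z * tensor G W z \<partial>lborel\<bar> \<le> Gb * Wb * (measure lborel S + enn2real A)"
    using \<open>0 \<le> Gb\<close> \<open>0 \<le> Wb\<close> by (simp add: ennreal_le_iff)
qed

lemma integral_tensor_Fubini:
  fixes Q :: "real \<times> 'b::euclidean_space \<Rightarrow> real"
  assumes "integrable lborel (\<lambda>z. Q z * tensor G W z)"
  shows "(\<integral> z. Q z * tensor G W z \<partial>lborel) = (\<integral> x. W x * (\<integral> m. Q (m, x) * G m \<partial>lborel) \<partial>lborel)"
proof -
  have "integrable (lborel \<Otimes>\<^sub>M lborel) (\<lambda>(m, x). Q (m, x) * G m * W x)"
    using assms by (simp add: lborel_prod case_prod_beta' tensor_def mult.assoc)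
  then have "(\<integral> x. (\<integral> m. Q (m, x) * G m * W x \<partial>lborel) \<partial>lborel) = (\<integral> z. Q z * tensor G W z \<partial>lborel)"
    by (simp add: lborel_pair.integral_snd lborel_prod case_prod_beta' tensor_def mult.assoc)
  then show ?thesis by (simp add: mult.commute)
qed

lemma tendsto_integral_plateau_tensor:
  fixes Q :: "real \<times> 'b::euclidean_space \<Rightarrow> real"
  assumes [measurable]: "Q \<in> borel_measurable lborel" "G \<in> borel_measurable lborel" "W \<in> borel_measurable lborel"
    and "integrable lborel (\<lambda>z. Q z * tensor G W z)"
  shows "(\<lambda>n. \<integral> z. Q z * tensor (\<lambda>m. G m * plateau n m) W z \<partial>lborel) \<longlonglongrightarrow> (\<integral> z. Q z * tensor G W z \<partial>lborel)"
proof (rule integral_dominated_convergence[where w = "\<lambda>z. \<bar>Q z * tensor G W z\<bar>"])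
  have [measurable]: "Q \<in> borel_measurable (lborel \<Otimes>\<^sub>M lborel)"
    using assms(1) by (simp add: lborel_prod)
  have "(\<lambda>z. Q z * tensor G W z) \<in> borel_measurable (lborel \<Otimes>\<^sub>M lborel)"
    and "(\<lambda>z. Q z * tensor (\<lambda>m. G m * plateau n m) W z) \<in> borel_measurable (lborel \<Otimes>\<^sub>M lborel)" for n
    by measurable
  then show "(\<lambda>z. Q z * tensor G W z) \<in> borel_measurable lborel"
    and "(\<lambda>z. Q z * tensor (\<lambda>m. G m * plateau n m) W z) \<in> borel_measurable lborel" for n
    by (simp_all add: lborel_prod)
  show "integrable lborel (\<lambda>z. \<bar>Q z * tensor G W z\<bar>)"
    using assms(4) by (rule integrable_abs)
  show "AE z in lborel. norm (Q z * tensor (\<lambda>m. G m * plateau n m) W z) \<le> \<bar>Q z * tensor G W z\<bar>" for n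
  proof (intro AE_I2)
    fix z :: "real \<times> 'b"
    have "\<bar>G (fst z)\<bar> * \<bar>plateau n (fst z)\<bar> \<le> \<bar>G (fst z)\<bar>"
      by (rule mult_left_le) (auto intro: plateau_bounds)
    then show "norm (Q z * tensor (\<lambda>m. G m * plateau n m) W z) \<le> \<bar>Q z * tensor G W z\<bar>"
      by (auto simp: tensor_def abs_mult intro!: mult_left_mono mult_right_mono)
  qed
  show "AE z in lborel. (\<lambda>n. Q z * tensor (\<lambda>m. G m * plateau n m) W z) \<longlonglongrightarrow> Q z * tensor G W z"
  proof (intro AE_I2)
    fix z :: "real \<times> 'b"
    have "(\<lambda>n. Q z * (G (fst z) * plateau n (fst z) * W (snd z))) \<longlonglongrightarrow> Q z * (G (fst z) * 1 * W (snd z))"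
      by (intro tendsto_intros tendsto_plateau)
    then show "(\<lambda>n. Q z * tensor (\<lambda>m. G m * plateau n m) W z) \<longlonglongrightarrow> Q z * tensor G W z"
      by (simp add: tensor_def)
  qed
qed

lemma square_integrable_partial_integral:
  fixes Q :: "real \<times> 'b::euclidean_space \<Rightarrow> real"
  assumes [measurable]: "Q \<in> borel_measurable lborel" "G \<in> borel_measurable lborel"
    and G_le: "\<And>m. \<bar>G m\<bar> \<le> Gb" and "mixed_norm_sq Q < \<infinity>"
  shows "(\<lambda>x. \<integral> m. Q (m, x) * G m \<partial>lborel) \<in> borel_measurable lborel"
    and "integrable lborel (\<lambda>x. (\<integral> m. Q (m, x) * G m \<partial>lborel)\<^sup>2)"
proof -
  have "0 \<le> Gb" using G_le[of 0] by linarith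
  have [measurable]: "Q \<in> borel_measurable (lborel \<Otimes>\<^sub>M lborel)"
    using assms(1) by (simp add: lborel_prod)
  show measurable: "(\<lambda>x. \<integral> m. Q (m, x) * G m \<partial>lborel) \<in> borel_measurable lborel"
    by measurable
  let ?g = "\<lambda>x. \<integral>\<^sup>+ m. ennreal \<bar>Q (m, x)\<bar> \<partial>lborel"
  have pointwise: "ennreal \<bar>\<integral> m. Q (m, x) * G m \<partial>lborel\<bar> \<le> ennreal Gb * ?g x" for x
  proof (cases "integrable lborel (\<lambda>m. Q (m, x) * G m)")
    case True
    have "ennreal \<bar>\<integral> m. Q (m, x) * G m \<partial>lborel\<bar> \<le> (\<integral>\<^sup>+ m. ennreal \<bar>Q (m, x) * G m\<bar> \<partial>lborel)"
      using integral_norm_bound_ennreal[OF True] by (simp add: real_norm_def)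
    also have "\<dots> \<le> (\<integral>\<^sup>+ m. ennreal Gb * ennreal \<bar>Q (m, x)\<bar> \<partial>lborel)"
      using G_le \<open>0 \<le> Gb\<close>
      by (intro nn_integral_mono) (simp add: abs_mult ennreal_mult[symmetric] mult.commute mult_right_mono)
    also have "\<dots> = ennreal Gb * ?g x"
      by (rule nn_integral_cmult) measurable
    finally show ?thesis .
  qed (simp add: not_integrable_integral_eq)
  have "(\<integral>\<^sup>+ x. ennreal (norm ((\<integral> m. Q (m, x) * G m \<partial>lborel)\<^sup>2)) \<partial>lborel) \<le> (\<integral>\<^sup>+ x. (ennreal Gb)\<^sup>2 * (?g x)\<^sup>2 \<partial>lborel)"
  proof (intro nn_integral_mono)
    fix x
    have "(ennreal \<bar>\<integral> m. Q (m, x) * G m \<partial>lborel\<bar>)\<^sup>2 \<le> (ennreal Gb * ?g x)\<^sup>2"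
      by (intro power_mono pointwise) auto
    then show "ennreal (norm ((\<integral> m. Q (m, x) * G m \<partial>lborel)\<^sup>2)) \<le> (ennreal Gb)\<^sup>2 * (?g x)\<^sup>2"
      by (simp add: ennreal_power real_norm_def power_mult_distrib)
  qed
  also have "\<dots> = (ennreal Gb)\<^sup>2 * mixed_norm_sq Q"
    unfolding mixed_norm_sq_def by (rule nn_integral_cmult) measurable
  also have "\<dots> < \<infinity>"
    using assms(4) ennreal_power[OF \<open>0 \<le> Gb\<close>, of 2] by (simp add: ennreal_mult_less_top)
  finally show "integrable lborel (\<lambda>x. (\<integral> m. Q (m, x) * G m \<partial>lborel)\<^sup>2)"
    unfolding integrable_iff_bounded using measurable by auto
qed

lemma tendsto_time_integral_plateau_tensor:
  fixes P :: "real \<times> 'b::euclidean_space \<Rightarrow> real \<Rightarrow> real"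
  assumes P_joint[measurable]: "(\<lambda>(z, s). indicator {0<..t} s * P z s) \<in> borel_measurable (lborel \<Otimes>\<^sub>M lborel)"
    and P_meas: "\<And>s. s \<in> {0<..t} \<Longrightarrow> (\<lambda>z. P z s) \<in> borel_measurable lborel"
    and P_norm: "\<And>s. s \<in> {0<..t} \<Longrightarrow> mixed_norm_sq (\<lambda>z. P z s) \<le> A" and "A < \<infinity>"
    and G_meas[measurable]: "G \<in> borel_measurable lborel"
    and W_meas[measurable]: "W \<in> borel_measurable lborel" and S_meas[measurable]: "S \<in> sets lborel"
    and G_le: "\<And>m. \<bar>G m\<bar> \<le> Gb" and W_le: "\<And>x. \<bar>W x\<bar> \<le> Wb * indicator S x" and "0 \<le> Wb"
    and "emeasure lborel S < \<infinity>"
  shows "(\<lambda>n. \<integral> s. indicator {0<..t} s * (\<integral> z. P z s * tensor (\<lambda>m. G m * plateau n m) W z \<partial>lborel) \<partial>lborel)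
     \<longlonglongrightarrow> (\<integral> s. indicator {0<..t} s * (\<integral> x. W x * (\<integral> m. P (m, x) s * G m \<partial>lborel) \<partial>lborel) \<partial>lborel)"
proof -
  let ?trunc = "\<lambda>n s. indicator {0<..t} s * (\<integral> z. P z s * tensor (\<lambda>m. G m * plateau n m) W z \<partial>lborel)"
  let ?lim = "\<lambda>s. indicator {0<..t} s * (\<integral> x. W x * (\<integral> m. P (m, x) s * G m \<partial>lborel) \<partial>lborel)"
  define C where "C = Gb * Wb * (measure lborel S + enn2real A)"
  have "0 \<le> Gb" using G_le[of 0] by linarith
  have G_plateau_le: "\<bar>G m * plateau n m\<bar> \<le> Gb" for n m
    using mult_mono[OF G_le plateau_bounds] \<open>0 \<le> Gb\<close> by (simp add: abs_mult)
  have pointwise: "(\<lambda>n. ?trunc n s) \<longlonglongrightarrow> ?lim s" for s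
  proof (cases "s \<in> {0<..t}")
    case True
    have integrable: "integrable lborel (\<lambda>z. P z s * tensor G W z)"
      by (rule integrable_tensor(1)[OF P_meas[OF True] G_meas W_meas S_meas G_le W_le \<open>0 \<le> Wb\<close>
            P_norm[OF True] \<open>A < \<infinity>\<close> \<open>emeasure lborel S < \<infinity>\<close>])
    show ?thesis
      using tendsto_integral_plateau_tensor[OF P_meas[OF True] G_meas W_meas integrable]
        integral_tensor_Fubini[OF integrable] True by simp
  qed simp
  have "(\<lambda>s. \<integral> z. (indicator {0<..t} s * P z s) * tensor (\<lambda>m. G m * plateau n m) W z \<partial>lborel)
      \<in> borel_measurable lborel" for n
    by measurable
  then have trunc_measurable: "?trunc n \<in> borel_measurable lborel" for n
    by (simp add: mult.assoc)
  have bound: "norm (?trunc n s) \<le> C * indicator {0<..t} s" for n s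
  proof (cases "s \<in> {0<..t}")
    case True
    show ?thesis
      using integrable_tensor(2)[OF P_meas[OF True] _ W_meas S_meas G_plateau_le W_le \<open>0 \<le> Wb\<close>
          P_norm[OF True] \<open>A < \<infinity>\<close> \<open>emeasure lborel S < \<infinity>\<close>] True
      unfolding C_def by simp
  qed simp
  have "integrable lborel (\<lambda>s. C * indicator {0<..t} s)"
    by (intro integrable_mult_right integrable_real_indicator emeasure_bounded_finite) auto
  from integral_dominated_convergence[OF borel_measurable_LIMSEQ_real[OF pointwise trunc_measurable]
      trunc_measurable this _ AE_I2[OF bound]] pointwise
  show ?thesis by simp
qed

section \<open>The weak formulation tested with truncated tensor products\<close>

definition qT :: "'n \<Rightarrow> (real \<Rightarrow> real^'n \<Rightarrow> real \<Rightarrow> real) \<Rightarrow> real \<Rightarrow> real \<times> (real^'n) \<Rightarrow> real" where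
  "qT i0 q s z = indicator (Tset i0) z * q (fst z) (snd z) s"

lemma indicator_Tset: "indicator (Tset i0) (m, x) = (indicator {x $ i0..} m :: 'a::zero_neq_one)"
  by (auto simp: Tset_def indicator_def)

lemma qH_eq_integral_qT: "qH i0 H q x s = (\<integral> m. qT i0 q s (m, x) * H m \<partial>lborel)"
  unfolding qH_def qT_def by (simp add: indicator_Tset mult_ac)

lemma inX_qT_measurable:
  assumes "inX i0 T q" "s \<in> {0<..T}"
  shows "qT i0 q s \<in> borel_measurable lborel"
  using assms unfolding inX_def qT_def[abs_def] by auto

lemma inX_qT_joint_measurable:
  assumes "inX i0 T q" "t \<le> T"
  shows "(\<lambda>(z, s). indicator {0<..t} s * qT i0 q s z) \<in> borel_measurable (lborel \<Otimes>\<^sub>M lborel)"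
proof -
  have [measurable]: "(\<lambda>(z, s). indicator (Tset i0) z * indicator {0<..T} s * q (fst z) (snd z) s)
      \<in> borel_measurable (lborel \<Otimes>\<^sub>M lborel)"
    using assms(1) unfolding inX_def by (simp add: lborel_prod)
  have "(\<lambda>(z, s). indicator {0<..t} s * (indicator (Tset i0) z * indicator {0<..T} s * q (fst z) (snd z) s))
      \<in> borel_measurable (lborel \<Otimes>\<^sub>M lborel)"
    by measurable
  also have "(\<lambda>(z, s). indicator {0<..t} s * (indicator (Tset i0) z * indicator {0<..T} s * q (fst z) (snd z) s))
      = (\<lambda>(z, s). indicator {0<..t} s * qT i0 q s z)"
    using assms(2) by (auto simp: qT_def indicator_def fun_eq_iff)
  finally show ?thesis .
qed

lemma inX_mixed_norm_bound:
  assumes "inX i0 T q"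
  obtains A where "A < \<infinity>" "\<And>s. s \<in> {0<..T} \<Longrightarrow> mixed_norm_sq (qT i0 q s) \<le> A"
proof
  let ?A = "SUP t\<in>{0<..T}. \<integral>\<^sup>+ x. (\<integral>\<^sup>+ m. indicator {x $ i0..} m * ennreal \<bar>q m x t\<bar> \<partial>lborel)\<^sup>2 \<partial>lborel"
  show "?A < \<infinity>" using assms unfolding inX_def by auto
  have "ennreal \<bar>qT i0 q s (m, x)\<bar> = indicator {x $ i0..} m * ennreal \<bar>q m x s\<bar>" for s m x
    by (cases "x $ i0 \<le> m") (simp_all add: qT_def indicator_Tset)
  then show "mixed_norm_sq (qT i0 q s) \<le> ?A" if "s \<in> {0<..T}" for s
    unfolding mixed_norm_sq_def using that by (auto intro: SUP_upper)
qed

lemma qH_square_integrable: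
  assumes "inX i0 T q" "t \<in> {0<..T}" "H \<in> borel_measurable lborel" "\<And>m. \<bar>H m\<bar> \<le> Hb"
  shows "(\<lambda>x. qH i0 H q x t) \<in> borel_measurable lborel \<and> integrable lborel (\<lambda>x. (qH i0 H q x t)\<^sup>2)"
proof -
  obtain A where "A < \<infinity>" "mixed_norm_sq (qT i0 q t) \<le> A"
    using inX_mixed_norm_bound[OF assms(1)] assms(2) by metis
  then show ?thesis
    using square_integrable_partial_integral[OF inX_qT_measurable[OF assms(1,2)] assms(3,4)]
    unfolding qH_eq_integral_qT by (simp add: le_less_trans)
qed

lemma weak_sol_tensor:
  assumes "weak_sol i0 T B q" "C2_with_derivs g g' g''" "bounded {m. g m \<noteq> 0}" "C2c F" "t \<in> {0<..T}"
  shows "(\<integral> z. qT i0 q t z * tensor g F z \<partial>lborel) =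
    (\<integral> s. indicator {0<..t} s * (\<integral> z. qT i0 q s z * tensor g (genL B F) z \<partial>lborel) \<partial>lborel)
    + 1/2 * (\<integral> s. indicator {0<..t} s * (\<integral> y. g' (y $ i0) * F y * trace i0 q y s \<partial>lborel) \<partial>lborel)"
proof -
  have "C2_fun F" "C1_fun F" using assms(4) unfolding C2c_def C2_fun_def by auto
  have "C2c (tensor g F)" by (rule C2c_tensor[OF assms(2-4)])
  then have "(\<integral> z. indicator (Tset i0) z * tensor g F z * q (fst z) (snd z) t \<partial>lborel) =
      (\<integral> s. indicator {0<..t} s *
        (\<integral> z. indicator (Tset i0) z * q (fst z) (snd z) s * LPhi i0 B (tensor g F) z \<partial>lborel) \<partial>lborel)
      + 1/2 * (\<integral> s. indicator {0<..t} s *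
        (\<integral> y. pd (tensor g F) (1, 0) (y $ i0, y) * trace i0 q y s \<partial>lborel) \<partial>lborel)"
    using assms(1,5) unfolding weak_sol_def by blast
  moreover note LPhi_tensor[OF assms(2) \<open>C2_fun F\<close>]
  moreover note C1_fun_tensor(2)[OF C2_with_derivsD(1,4)[OF assms(2)] \<open>C1_fun F\<close>]
  ultimately show ?thesis
    by (simp add: qT_def tensor_def mult_ac)
qed

lemma tendsto_integral_qT_plateau:
  assumes "inX i0 T q" "t \<in> {0<..T}" "H \<in> borel_measurable lborel" "\<And>m. \<bar>H m\<bar> \<le> Hb"
    and "continuous_on UNIV W" "compact S" "\<And>x. x \<notin> S \<Longrightarrow> W x = 0"
  shows "(\<lambda>n. \<integral> z. qT i0 q t z * tensor (\<lambda>m. H m * plateau n m) W z \<partial>lborel)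
    \<longlonglongrightarrow> (\<integral> x. W x * qH i0 H q x t \<partial>lborel)"
proof -
  obtain A where "A < \<infinity>" "mixed_norm_sq (qT i0 q t) \<le> A"
    using inX_mixed_norm_bound[OF assms(1)] assms(2) by metis
  obtain Wb where "\<And>x. \<bar>W x\<bar> \<le> Wb * indicator S x" "0 \<le> Wb"
    using compact_support_bound[OF assms(5-7)] by metis
  have W_meas: "W \<in> borel_measurable lborel"
    using borel_measurable_continuous_onI[OF assms(5)] by simp
  have S_meas: "S \<in> sets lborel" using assms(6) by (simp add: borel_compact)
  have S_finite: "emeasure lborel S < \<infinity>"
    by (rule emeasure_bounded_finite[OF compact_imp_bounded[OF assms(6)]])
  note qT_measurable = inX_qT_measurable[OF assms(1,2)]
  have integrable: "integrable lborel (\<lambda>z. qT i0 q t z * tensor H W z)"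
    by (rule integrable_tensor(1)[OF qT_measurable assms(3) W_meas S_meas assms(4)
          \<open>\<And>x. \<bar>W x\<bar> \<le> Wb * indicator S x\<close> \<open>0 \<le> Wb\<close> \<open>mixed_norm_sq (qT i0 q t) \<le> A\<close>
          \<open>A < \<infinity>\<close> S_finite])
  have "(\<lambda>n. \<integral> z. qT i0 q t z * tensor (\<lambda>m. H m * plateau n m) W z \<partial>lborel)
      \<longlonglongrightarrow> (\<integral> z. qT i0 q t z * tensor H W z \<partial>lborel)"
    by (rule tendsto_integral_plateau_tensor[OF qT_measurable assms(3) W_meas integrable])
  also have "(\<integral> z. qT i0 q t z * tensor H W z \<partial>lborel) = (\<integral> x. W x * qH i0 H q x t \<partial>lborel)"
    unfolding qH_eq_integral_qT by (rule integral_tensor_Fubini[OF integrable])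
  finally show ?thesis .
qed

lemma tendsto_time_integral_qT_plateau:
  assumes "inX i0 T q" "t \<in> {0<..T}" "H \<in> borel_measurable lborel" "\<And>m. \<bar>H m\<bar> \<le> Hb"
    and "continuous_on UNIV W" "compact S" "\<And>x. x \<notin> S \<Longrightarrow> W x = 0"
  shows "(\<lambda>n. \<integral> s. indicator {0<..t} s * (\<integral> z. qT i0 q s z * tensor (\<lambda>m. H m * plateau n m) W z \<partial>lborel) \<partial>lborel)
    \<longlonglongrightarrow> (\<integral> s. indicator {0<..t} s * (\<integral> x. W x * qH i0 H q x s \<partial>lborel) \<partial>lborel)"
proof -
  obtain A where "A < \<infinity>" "\<And>s. s \<in> {0<..T} \<Longrightarrow> mixed_norm_sq (qT i0 q s) \<le> A"
    using inX_mixed_norm_bound[OF assms(1)] by metis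
  then have norm_le: "\<And>s. s \<in> {0<..t} \<Longrightarrow> mixed_norm_sq (\<lambda>z. qT i0 q s z) \<le> A"
    using assms(2) by auto
  have measurable: "\<And>s. s \<in> {0<..t} \<Longrightarrow> (\<lambda>z. qT i0 q s z) \<in> borel_measurable lborel"
    using inX_qT_measurable[OF assms(1)] assms(2) by auto
  have joint: "(\<lambda>(z, s). indicator {0<..t} s * qT i0 q s z) \<in> borel_measurable (lborel \<Otimes>\<^sub>M lborel)"
    using inX_qT_joint_measurable[OF assms(1)] assms(2) by auto
  obtain Wb where "\<And>x. \<bar>W x\<bar> \<le> Wb * indicator S x" "0 \<le> Wb"
    using compact_support_bound[OF assms(5-7)] by metis
  have W_meas: "W \<in> borel_measurable lborel"
    using borel_measurable_continuous_onI[OF assms(5)] by simp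
  have S_meas: "S \<in> sets lborel" using assms(6) by (simp add: borel_compact)
  have S_finite: "emeasure lborel S < \<infinity>"
    by (rule emeasure_bounded_finite[OF compact_imp_bounded[OF assms(6)]])
  show ?thesis
    unfolding qH_eq_integral_qT
    by (rule tendsto_time_integral_plateau_tensor[where P = "\<lambda>z s. qT i0 q s z",
        OF joint measurable norm_le \<open>A < \<infinity>\<close> assms(3) W_meas S_meas assms(4)
        \<open>\<And>x. \<bar>W x\<bar> \<le> Wb * indicator S x\<close> \<open>0 \<le> Wb\<close> S_finite])
qed

lemma C2_truncation:
  assumes "C2_fun H"
  shows "\<exists>G''. C2_with_derivs (\<lambda>m. H m * plateau n m) (\<lambda>m. deriv H m * plateau n m + H m * plateau' n m) G''"
    and "bounded {m. H m * plateau n m \<noteq> 0}"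
proof -
  obtain p'' where "C2_with_derivs (plateau n) (plateau' n) p''" using C2_plateau by blast
  from C2_with_derivs_mult[OF C2_fun_real[OF assms] this]
  show "\<exists>G''. C2_with_derivs (\<lambda>m. H m * plateau n m) (\<lambda>m. deriv H m * plateau n m + H m * plateau' n m) G''"
    by blast
  have "{m. H m * plateau n m \<noteq> 0} \<subseteq> {- real n - 1 .. real n + 1}"
    using plateau_eq_0[of n] by (force simp: abs_le_iff)
  then show "bounded {m. H m * plateau n m \<noteq> 0}" by (rule bounded_subset[rotated]) simp
qed

lemma weak_sol_truncated:
  assumes "weak_sol i0 T B q" "C2_fun H" "C2c F" "t \<in> {0<..T}"
    and "\<And>y. F y \<noteq> 0 \<Longrightarrow> \<bar>y $ i0\<bar> \<le> n"
  shows "(\<integral> z. qT i0 q t z * tensor (\<lambda>m. H m * plateau n m) F z \<partial>lborel) =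
    (\<integral> s. indicator {0<..t} s * (\<integral> z. qT i0 q s z * tensor (\<lambda>m. H m * plateau n m) (genL B F) z \<partial>lborel) \<partial>lborel)
    + 1/2 * (\<integral> s. indicator {0<..t} s * (\<integral> y. deriv H (y $ i0) * F y * trace i0 q y s \<partial>lborel) \<partial>lborel)"
proof -
  let ?G' = "\<lambda>m. deriv H m * plateau n m + H m * plateau' n m"
  obtain G'' where "C2_with_derivs (\<lambda>m. H m * plateau n m) ?G' G''"
    using C2_truncation(1)[OF assms(2)] by blast
  note weak_sol_tensor[OF assms(1) this C2_truncation(2)[OF assms(2)] assms(3,4)]
  moreover have "?G' (y $ i0) * F y * trace i0 q y s = deriv H (y $ i0) * F y * trace i0 q y s" for y s
    using assms(5)[of y] by (cases "F y = 0") (auto simp: plateau_eq_1)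
  ultimately show ?thesis by (simp only:)
qed

lemma qH_weak_equation:
  fixes F :: "real^'n \<Rightarrow> real"
  assumes "C1b_field B" "weak_sol i0 T B q" "C2_fun H" "bounded (range H)" "C2c F" "t \<in> {0<..T}"
  shows "(\<integral> x. F x * qH i0 H q x t \<partial>lborel) =
    (\<integral> s. indicator {0<..t} s * (\<integral> x. genL B F x * qH i0 H q x s \<partial>lborel) \<partial>lborel)
    + 1/2 * (\<integral> s. indicator {0<..t} s * (\<integral> y. deriv H (y $ i0) * F y * trace i0 q y s \<partial>lborel) \<partial>lborel)"
proof -
  have X: "inX i0 T q" using assms(2) unfolding weak_sol_def by blast
  have support: "compact (closure {x. F x \<noteq> 0})" and "C2_fun F"
    using assms(5) unfolding C2c_def by auto
  obtain Hb where H_le: "\<And>m. \<bar>H m\<bar> \<le> Hb" using assms(4) unfolding bounded_iff by auto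
  note H_meas = borel_measurable_C2_fun[OF assms(3)]
  have "continuous_on UNIV F" using \<open>C2_fun F\<close> unfolding C2_fun_def C1_fun_def by simp
  note F_lim = tendsto_integral_qT_plateau[OF X assms(6) H_meas H_le this support vanishing_outside_support(1)[where F = F]]
  note L_lim = tendsto_time_integral_qT_plateau[OF X assms(6) H_meas H_le continuous_on_genL[OF assms(1) \<open>C2_fun F\<close>]
      support genL_vanishing_outside_support]
  obtain R where "\<And>y. F y \<noteq> 0 \<Longrightarrow> \<bar>y $ i0\<bar> \<le> R" using C2c_component_bound[OF assms(5)] by blast
  moreover obtain N :: nat where "R \<le> N" using real_arch_simple by blast
  ultimately have "\<forall>\<^sub>F n in sequentially.
      (\<integral> s. indicator {0<..t} s * (\<integral> z. qT i0 q s z * tensor (\<lambda>m. H m * plateau n m) (genL B F) z \<partial>lborel) \<partial>lborel)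
      + 1/2 * (\<integral> s. indicator {0<..t} s * (\<integral> y. deriv H (y $ i0) * F y * trace i0 q y s \<partial>lborel) \<partial>lborel)
      = (\<integral> z. qT i0 q t z * tensor (\<lambda>m. H m * plateau n m) F z \<partial>lborel)"
    by (intro eventually_sequentiallyI[of N] weak_sol_truncated[OF assms(2,3,5,6), symmetric])
      (meson of_nat_le_iff order_trans)
  from LIMSEQ_unique[OF F_lim Lim_transform_eventually[OF tendsto_add[OF L_lim tendsto_const] this]]
  show ?thesis .
qed

theorem proposition1:
  fixes B :: "real^'n \<Rightarrow> real^'n" and i0 :: 'n and T :: real
    and q :: "real \<Rightarrow> real^'n \<Rightarrow> real \<Rightarrow> real" and H :: "real \<Rightarrow> real"
  assumes "T > 0"
    and "C1b_field B"
    and "weak_sol i0 T B q"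
    and "C2b_real H"
    and "compact (closure {m. deriv H m \<noteq> 0})"
  shows "(\<forall>t\<in>{0<..T}. (\<lambda>x. qH i0 H q x t) \<in> borel_measurable lborel \<and>
            integrable lborel (\<lambda>x. (qH i0 H q x t)\<^sup>2)) \<and>
         (\<forall>F. C2c F \<longrightarrow> (\<forall>t\<in>{0<..T}.
            (\<integral> x. F x * qH i0 H q x t \<partial>lborel) =
            (\<integral> s. indicator {0<..t} s * (\<integral> x. genL B F x * qH i0 H q x s \<partial>lborel) \<partial>lborel)
            + 1/2 * (\<integral> s. indicator {0<..t} s *
                (\<integral> y. deriv H (y $ i0) * F y * trace i0 q y s \<partial>lborel) \<partial>lborel)))"
proof -
  have "inX i0 T q" using assms(3) unfolding weak_sol_def by blast
  have "C2_fun H" "bounded (range H)" using assms(4) unfolding C2b_real_def by auto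
  then obtain Hb where "\<And>m. \<bar>H m\<bar> \<le> Hb" unfolding bounded_iff by auto
  then show ?thesis
    using qH_square_integrable[OF \<open>inX i0 T q\<close> _ borel_measurable_C2_fun[OF \<open>C2_fun H\<close>]]
      qH_weak_equation[OF assms(2,3) \<open>C2_fun H\<close> \<open>bounded (range H)\<close>]
    by blast
qed

end
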